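(* Let $S$ be a CLP-compact semitopological semigroup which contains a graph inverse semigroup $G(E)$ as a dense subsemigroup. Then for each subset $X\subset G(E)$ the closure $\overline{X}^S$ is countably compact at $X$.
   Context: All spaces are Hausdorff. A semitopological semigroup is a space with separately continuous associative multiplication. CLP-compact: every cover by clopen sets has a finite subcover. A space $W$ is countably compact at $A\subset W$ if every infinite $B\subset A$ has an accumulation point in $W$. A directed graph $E=(E^0,E^1,r,s)$ has vertices $E^0$, edges $E^1$, source/range maps $s,r:E^1\to E^0$; paths are vertices and sequences of edges $e_1\ldots e_n$ with $r(e_i)=s(e_{i+1})$. The graph inverse semigroup $G(E)$ is the semigroup with zero $0$ generated by $E^0$, $E^1$, $E^{-1}=\{e^{-1}\mid e\in E^1\}$ subject to: for $a,b\in E^0$, $e,f\in E^1$: $ab=a$ if $a=b$, else $0$; $s(e)e=er(e)=e$; $e^{-1}s(e)=r(e)e^{-1}=e^{-1}$; $e^{-1}f=r(e)$ if $e=f$, else $0$. *)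

theory Defs
  imports "HOL-Analysis.Analysis" "HOL-Library.Sublist"
begin

text \<open>Directed graph E = (E0, E1, r, s). A path is represented as a pair (v, es):
  v is its source vertex, es its list of edges (empty for the trivial path v).\<close>

definition is_path :: "'v set \<Rightarrow> 'e set \<Rightarrow> ('e \<Rightarrow> 'v) \<Rightarrow> ('e \<Rightarrow> 'v) \<Rightarrow> 'v \<times> 'e list \<Rightarrow> bool" where
  "is_path E0 E1 s r p \<longleftrightarrow>
     fst p \<in> E0 \<and> set (snd p) \<subseteq> E1 \<and>
     (snd p \<noteq> [] \<longrightarrow> s (hd (snd p)) = fst p) \<and>
     (\<forall>i. Suc i < length (snd p) \<longrightarrow> r (snd p ! i) = s (snd p ! Suc i))"

definition path_range :: "('e \<Rightarrow> 'v) \<Rightarrow> 'v \<times> 'e list \<Rightarrow> 'v" where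
  "path_range r p = (if snd p = [] then fst p else r (last (snd p)))"

text \<open>Elements of the graph inverse semigroup in normal form:
  None is the zero, Some (p, q) is p q^{-1} with r(p) = r(q).\<close>

type_synonym ('v, 'e) gis_elem = "(('v \<times> 'e list) \<times> ('v \<times> 'e list)) option"

definition graph_inverse_semigroup ::
  "'v set \<Rightarrow> 'e set \<Rightarrow> ('e \<Rightarrow> 'v) \<Rightarrow> ('e \<Rightarrow> 'v) \<Rightarrow> ('v, 'e) gis_elem set" where
  "graph_inverse_semigroup E0 E1 s r =
     {None} \<union> {Some (p, q) | p q. is_path E0 E1 s r p \<and> is_path E0 E1 s r q \<and>
                                   path_range r p = path_range r q}"

text \<open>Multiplication: (p q^{-1})(p' q'^{-1}) = p w q'^{-1} if p' = q w,
  = p (q' w)^{-1} if q = p' w, and 0 otherwise.\<close>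

definition gis_mult :: "('v, 'e) gis_elem \<Rightarrow> ('v, 'e) gis_elem \<Rightarrow> ('v, 'e) gis_elem" where
  "gis_mult x y = (case (x, y) of
     (Some (p, q), Some (p', q')) \<Rightarrow>
        if fst q = fst p' \<and> prefix (snd q) (snd p')
        then Some ((fst p, snd p @ drop (length (snd q)) (snd p')), q')
        else if fst q = fst p' \<and> prefix (snd p') (snd q)
        then Some (p, (fst q', snd q' @ drop (length (snd p')) (snd q)))
        else None
   | _ \<Rightarrow> None)"

definition semitopological_semigroup :: "('s::t2_space \<Rightarrow> 's \<Rightarrow> 's) \<Rightarrow> bool" where
  "semitopological_semigroup mul \<longleftrightarrow>
     (\<forall>x y z. mul (mul x y) z = mul x (mul y z)) \<and>
     (\<forall>a. continuous_on UNIV (mul a) \<and> continuous_on UNIV (\<lambda>x. mul x a))"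

definition clp_compact :: "'a::topological_space set \<Rightarrow> bool" where
  "clp_compact W \<longleftrightarrow>
     (\<forall>\<U>. (\<forall>U\<in>\<U>. openin (top_of_set W) U \<and> closedin (top_of_set W) U) \<and> W \<subseteq> \<Union>\<U> \<longrightarrow>
          (\<exists>\<F>\<subseteq>\<U>. finite \<F> \<and> W \<subseteq> \<Union>\<F>))"

definition countably_compact_at :: "'a::topological_space set \<Rightarrow> 'a set \<Rightarrow> bool" where
  "countably_compact_at W A \<longleftrightarrow>
     (\<forall>B\<subseteq>A. infinite B \<longrightarrow> (\<exists>x\<in>W. x islimpt B))"

end

(* Every nonzero element a = u v^{-1} of G(E) is an isolated point of S. By separate continuity,
   sets such as {y. c y \<noteq> 0} and {y. d y \<noteq> y} are open, and for suitable c, d in G(E) these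
   conditions force an element of G(E) near a to be of the form u' v'^{-1} with u', v' prefixes of
   u, v. So some neighbourhood of a meets the dense subsemigroup G(E) in a finite set, and a is
   isolated. Now an infinite B \<subseteq> X without accumulation point would be closed, and discrete off 0;
   the clopen cover of S by the complement of B - {0} and the singletons of B - {0} then has no
   finite subcover, contradicting CLP-compactness. *)
theory Submission
  imports Defs
begin

lemma is_path_Nil [simp]: "is_path E0 E1 s r (a, []) \<longleftrightarrow> a \<in> E0"
  by (simp add: is_path_def)

lemma path_range_Nil [simp]: "path_range r (a, []) = a"
  by (simp add: path_range_def)

lemma path_range_Cons [simp]: "path_range r (a, e # es) = path_range r (r e, es)"
  by (simp add: path_range_def)

lemma path_range_append: "path_range r (a, xs @ ys) = path_range r (path_range r (a, xs), ys)"
  by (induction xs arbitrary: a) auto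

definition gis_inv :: "('v, 'e) gis_elem \<Rightarrow> ('v, 'e) gis_elem" where
  "gis_inv = map_option prod.swap"

lemma gis_inv_gis_inv [simp]: "gis_inv (gis_inv x) = x"
  by (cases x) (auto simp: gis_inv_def)

lemma gis_mult_gis_inv: "gis_mult (gis_inv x) (gis_inv y) = gis_inv (gis_mult y x)"
  by (auto simp: gis_inv_def gis_mult_def split: option.split dest: prefix_order.antisym)

locale directed_graph =
  fixes E0 :: "'v set" and E1 :: "'e set" and s r :: "'e \<Rightarrow> 'v"
  assumes source_mem: "e \<in> E1 \<Longrightarrow> s e \<in> E0" and range_mem: "e \<in> E1 \<Longrightarrow> r e \<in> E0"
begin

abbreviation G :: "('v, 'e) gis_elem set" where
  "G \<equiv> graph_inverse_semigroup E0 E1 s r"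

lemma is_path_Cons:
  "is_path E0 E1 s r (a, e # es) \<longleftrightarrow> e \<in> E1 \<and> s e = a \<and> is_path E0 E1 s r (r e, es)"
proof
  assume p: "is_path E0 E1 s r (a, e # es)"
  then have "\<forall>i. Suc i < length es \<longrightarrow> r (es ! i) = s (es ! Suc i)"
    unfolding is_path_def by (metis Suc_mono length_Cons nth_Cons_Suc snd_conv)
  moreover have "es \<noteq> [] \<Longrightarrow> s (hd es) = r e"
    using p unfolding is_path_def
    by (metis hd_conv_nth length_Cons length_greater_0_conv nth_Cons_0 nth_Cons_Suc snd_conv Suc_mono)
  ultimately show "e \<in> E1 \<and> s e = a \<and> is_path E0 E1 s r (r e, es)"
    using p range_mem by (auto simp: is_path_def)
next
  assume "e \<in> E1 \<and> s e = a \<and> is_path E0 E1 s r (r e, es)"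
  then show "is_path E0 E1 s r (a, e # es)"
    using source_mem unfolding is_path_def
    by (auto simp: nth_Cons split: nat.split) (metis hd_conv_nth length_greater_0_conv)
qed

lemma is_path_append:
  "is_path E0 E1 s r (a, xs @ ys) \<longleftrightarrow>
    is_path E0 E1 s r (a, xs) \<and> is_path E0 E1 s r (path_range r (a, xs), ys)"
proof (induction xs arbitrary: a)
  case Nil
  show ?case by (auto simp: is_path_def)
next
  case (Cons e xs)
  then show ?case by (auto simp: is_path_Cons)
qed

lemma path_range_mem: "is_path E0 E1 s r (a, xs) \<Longrightarrow> path_range r (a, xs) \<in> E0"
  using is_path_append[of a xs "[]"] by simp

lemma gis_Some_iff [simp]:
  "Some (p, q) \<in> G \<longleftrightarrow>
     is_path E0 E1 s r p \<and> is_path E0 E1 s r q \<and> path_range r p = path_range r q"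
  by (cases p; cases q) (auto simp: graph_inverse_semigroup_def)

lemma gis_None_mem [simp]: "None \<in> G"
  by (simp add: graph_inverse_semigroup_def)

lemma gis_inv_mem: "x \<in> G \<Longrightarrow> gis_inv x \<in> G"
  by (cases x) (auto simp: gis_inv_def)

lemma gis_inv_image: "gis_inv ` G = G"
  using gis_inv_mem by (metis gis_inv_gis_inv image_eqI subsetI subset_antisym image_subsetI)

lemma is_path_graft:
  assumes "is_path E0 E1 s r (a, xs)" "is_path E0 E1 s r (b, ys @ zs)"
    and "path_range r (a, xs) = path_range r (b, ys)"
  shows "is_path E0 E1 s r (a, xs @ zs)" "path_range r (a, xs @ zs) = path_range r (b, ys @ zs)"
  using assms by (simp_all add: is_path_append path_range_append)

lemma gis_mult_mem:
  assumes "x \<in> G" "y \<in> G"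
  shows "gis_mult x y \<in> G"
proof (cases "gis_mult x y")
  case Some
  then obtain p q p' q' where xy: "x = Some (p, q)" "y = Some (p', q')"
    by (auto simp: gis_mult_def split: option.splits)
  obtain a xs b ys c zs d ws where [simp]: "p = (a, xs)" "q = (b, ys)" "p' = (c, zs)" "q' = (d, ws)"
    by (cases p; cases q; cases p'; cases q')
  show ?thesis
  proof (cases "b = c \<and> prefix ys zs")
    case True
    then obtain w where "zs = ys @ w" by (auto simp: prefix_def)
    then show ?thesis using assms True is_path_graft[of a xs b ys w]
      by (auto simp: xy gis_mult_def)
  next
    case False
    then have "b = c \<and> prefix zs ys" using Some by (auto simp: xy gis_mult_def split: if_splits)
    then obtain w where "ys = zs @ w" by (auto simp: prefix_def)
    then show ?thesis using assms False is_path_graft[of d ws c zs w]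
      by (auto simp: xy gis_mult_def)
  qed
qed simp

(* If the range e of u emits an edge g, take c = (ug)^{-1} and d = (ug)(ug)^{-1}: then c x \<noteq> 0 and
   d x \<noteq> x say that the first path of x is a proper prefix of ug. If e is a sink, no path properly
   extends u, and c = u^{-1} alone does the job. *)
lemma gis_left_separating_pair:
  assumes a: "Some ((u1, u2), q) \<in> G"
  obtains c d where "c \<in> G" "d \<in> G"
    "gis_mult c (Some ((u1, u2), q)) \<noteq> None"
    "gis_mult d (Some ((u1, u2), q)) \<noteq> Some ((u1, u2), q)"
    "\<And>x. x \<in> G \<Longrightarrow> gis_mult c x \<noteq> None \<Longrightarrow> gis_mult d x \<noteq> x \<Longrightarrow>
       \<exists>p2 q'. x = Some ((u1, p2), q') \<and> prefix p2 u2"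
proof (cases "\<exists>g\<in>E1. s g = path_range r (u1, u2)")
  case True
  then obtain g where g: "g \<in> E1" "s g = path_range r (u1, u2)" by blast
  have ug: "is_path E0 E1 s r (u1, u2 @ [g])" "path_range r (u1, u2 @ [g]) = r g"
    using a g range_mem by (auto simp: is_path_append is_path_Cons path_range_append)
  define c where "c = Some ((r g, [] :: 'e list), (u1, u2 @ [g]))"
  define d where "d = Some ((u1, u2 @ [g]), (u1, u2 @ [g]))"
  show thesis
  proof (rule that[of c d])
    show "c \<in> G" "d \<in> G" using ug g range_mem by (auto simp: c_def d_def)
    show "gis_mult c (Some ((u1, u2), q)) \<noteq> None"
      "gis_mult d (Some ((u1, u2), q)) \<noteq> Some ((u1, u2), q)"
      by (auto simp: c_def d_def gis_mult_def)
  next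
    fix x assume "x \<in> G" "gis_mult c x \<noteq> None" "gis_mult d x \<noteq> x"
    then obtain p1 p2 q' where x: "x = Some ((p1, p2), q')" "p1 = u1"
        and "prefix p2 (u2 @ [g])" "p2 \<noteq> u2 @ [g]"
      by (cases x) (auto simp: c_def d_def gis_mult_def prefix_def split: if_splits)
    then show "\<exists>p2 q'. x = Some ((u1, p2), q') \<and> prefix p2 u2"
      by (auto simp: prefix_snoc)
  qed
next
  case False
  let ?e = "path_range r (u1, u2)"
  define c where "c = Some ((?e, [] :: 'e list), (u1, u2))"
  show thesis
  proof (rule that[of c None])
    show "c \<in> G" using a path_range_mem[of u1 u2] by (auto simp: c_def)
    show "gis_mult c (Some ((u1, u2), q)) \<noteq> None" by (simp add: c_def gis_mult_def)
  next
    fix x assume x: "x \<in> G" "gis_mult c x \<noteq> None"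
    then obtain p2 q' where x_eq: "x = Some ((u1, p2), q')" and "prefix u2 p2 \<or> prefix p2 u2"
      by (cases x) (auto simp: c_def gis_mult_def split: if_splits)
    moreover have "\<not> strict_prefix u2 p2"
    proof
      assume "strict_prefix u2 p2"
      then obtain y ys where "p2 = u2 @ y # ys"
        by (metis prefix_def strict_prefix_def self_append_conv neq_Nil_conv)
      then show False using x x_eq False by (auto simp: is_path_append is_path_Cons)
    qed
    ultimately show "\<exists>p2 q'. x = Some ((u1, p2), q') \<and> prefix p2 u2"
      by (auto simp: strict_prefix_def)
  qed (simp_all add: gis_mult_def)
qed

end

lemma semitopological_semigroup_flip:
  "semitopological_semigroup mul \<Longrightarrow> semitopological_semigroup (\<lambda>x y. mul y x)"
  by (simp add: semitopological_semigroup_def)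

lemma semitopological_open_translate_neq:
  assumes "semitopological_semigroup mul"
  shows "open {y. mul c y \<noteq> d}" "open {y. mul c y \<noteq> y}"
proof -
  have "continuous_on UNIV (mul c)"
    using assms by (simp add: semitopological_semigroup_def)
  then show "open {y. mul c y \<noteq> d}" "open {y. mul c y \<noteq> y}"
    by (simp_all add: open_Collect_neq continuous_on_id)
qed

lemma isolated_of_dense_finite_trace:
  fixes D W :: "'a::t1_space set"
  assumes dense: "closure D = UNIV" and W: "open W" "x \<in> W" and fin: "finite (W \<inter> D)"
  shows "open {x}"
proof -
  define W' where "W' = W - (W \<inter> D - {x})"
  have "open W'" using W fin by (auto simp: W'_def intro: open_Diff finite_imp_closed)
  have "W' \<subseteq> closure (W' \<inter> D)"
    using open_Int_closure_subset[OF \<open>open W'\<close>, of D] dense by simp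
  also have "\<dots> \<subseteq> {x}" by (rule closure_minimal) (auto simp: W'_def)
  finally have "W' = {x}" using W by (auto simp: W'_def)
  with \<open>open W'\<close> show ?thesis by simp
qed

lemma clp_compact_closed_isolated_finite:
  fixes A :: "'a::t1_space set"
  assumes clp: "clp_compact (UNIV :: 'a set)" and "closed A" and isolated: "\<And>a. a \<in> A \<Longrightarrow> open {a}"
  shows "finite A"
proof -
  have "open A" using isolated open_UN[of A "\<lambda>a. {a}"] by simp
  define \<U> where "\<U> = insert (- A) ((\<lambda>a. {a}) ` A)"
  have "\<forall>U\<in>\<U>. openin (top_of_set UNIV) U \<and> closedin (top_of_set UNIV) U"
    using \<open>closed A\<close> \<open>open A\<close> isolated by (auto simp: \<U>_def)
  moreover have "UNIV \<subseteq> \<Union>\<U>" by (auto simp: \<U>_def)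
  ultimately obtain \<F> where \<F>: "\<F> \<subseteq> \<U>" "finite \<F>" "UNIV \<subseteq> \<Union>\<F>"
    using clp[unfolded clp_compact_def, rule_format, of \<U>] by blast
  have "(\<lambda>a. {a}) ` A \<subseteq> \<F>"
  proof clarify
    fix a assume "a \<in> A"
    then obtain T where "T \<in> \<F>" "a \<in> T" using \<F>(3) by blast
    moreover have "T = {a}" using \<F>(1) \<open>T \<in> \<F>\<close> \<open>a \<in> T\<close> \<open>a \<in> A\<close> by (auto simp: \<U>_def)
    ultimately show "{a} \<in> \<F>" by simp
  qed
  then have "finite ((\<lambda>a. {a}) ` A)" using \<F>(2) by (rule finite_subset)
  then show ?thesis by (rule finite_imageD) (simp add: inj_on_def)
qed

lemma clp_compact_countably_compact_at_closure:
  fixes A F :: "'a::t1_space set"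
  assumes clp: "clp_compact (UNIV :: 'a set)" and "finite F"
    and isolated: "\<And>a. a \<in> A - F \<Longrightarrow> open {a}"
  shows "countably_compact_at (closure A) A"
  unfolding countably_compact_at_def
proof (intro allI impI)
  fix B assume "B \<subseteq> A" "infinite B"
  show "\<exists>x\<in>closure A. x islimpt B"
  proof (rule ccontr)
    assume no_limpt: "\<not> (\<exists>x\<in>closure A. x islimpt B)"
    have "\<not> x islimpt (B - F)" for x
    proof
      assume "x islimpt (B - F)"
      then have "x islimpt B" by (rule islimpt_subset) blast
      moreover from this have "x \<in> closure A"
        using closure_mono[OF \<open>B \<subseteq> A\<close>] by (auto simp: closure_def)
      ultimately show False using no_limpt by blast
    qed
    then have "closed (B - F)" by (simp add: closed_limpt)
    then have "finite (B - F)"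
      by (rule clp_compact_closed_isolated_finite[OF clp]) (use isolated \<open>B \<subseteq> A\<close> in blast)
    with \<open>finite F\<close> \<open>infinite B\<close> show False by simp
  qed
qed

locale gis_embedding = directed_graph E0 E1 s r
  for E0 :: "'v set" and E1 :: "'e set" and s r :: "'e \<Rightarrow> 'v" +
  fixes mul :: "'s::t2_space \<Rightarrow> 's \<Rightarrow> 's" and h :: "('v, 'e) gis_elem \<Rightarrow> 's"
  assumes semitop: "semitopological_semigroup mul"
    and inj: "inj_on h (graph_inverse_semigroup E0 E1 s r)"
    and hom: "\<And>x y. x \<in> graph_inverse_semigroup E0 E1 s r \<Longrightarrow> y \<in> graph_inverse_semigroup E0 E1 s r \<Longrightarrow>
      h (gis_mult x y) = mul (h x) (h y)"
begin

lemma left_prefix_neighbourhood: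
  assumes a: "Some ((u1, u2), q) \<in> G"
  obtains W where "open W" "h (Some ((u1, u2), q)) \<in> W"
    "\<And>x. x \<in> G \<Longrightarrow> h x \<in> W \<Longrightarrow> \<exists>p2 q'. x = Some ((u1, p2), q') \<and> prefix p2 u2"
proof -
  obtain c d where cd: "c \<in> G" "d \<in> G"
    "gis_mult c (Some ((u1, u2), q)) \<noteq> None"
    "gis_mult d (Some ((u1, u2), q)) \<noteq> Some ((u1, u2), q)"
    and separates: "\<And>x. x \<in> G \<Longrightarrow> gis_mult c x \<noteq> None \<Longrightarrow> gis_mult d x \<noteq> x \<Longrightarrow>
       \<exists>p2 q'. x = Some ((u1, p2), q') \<and> prefix p2 u2"
    using gis_left_separating_pair[OF a] by blast
  define W where "W = {y. mul (h c) y \<noteq> h None} \<inter> {y. mul (h d) y \<noteq> y}"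
  show thesis
  proof (rule that[of W])
    show "open W"
      unfolding W_def using semitopological_open_translate_neq[OF semitop] by blast
    let ?a = "Some ((u1, u2), q)"
    have "h (gis_mult c ?a) \<noteq> h None" "h (gis_mult d ?a) \<noteq> h ?a"
      using cd a gis_mult_mem inj_onD[OF inj] by (metis gis_None_mem)+
    then show "h ?a \<in> W"
      using cd a by (simp add: W_def hom del: gis_Some_iff)
  next
    fix x assume "x \<in> G" "h x \<in> W"
    then have "h (gis_mult c x) \<noteq> h None" "h (gis_mult d x) \<noteq> h x"
      using hom[OF cd(1) \<open>x \<in> G\<close>] hom[OF cd(2) \<open>x \<in> G\<close>] by (simp_all add: W_def)
    then have "gis_mult c x \<noteq> None" "gis_mult d x \<noteq> x" by metis+
    with \<open>x \<in> G\<close> show "\<exists>p2 q'. x = Some ((u1, p2), q') \<and> prefix p2 u2"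
      by (rule separates)
  qed
qed

lemma gis_embedding_flip: "gis_embedding E0 E1 s r (\<lambda>x y. mul y x) (h \<circ> gis_inv)"
proof unfold_locales
  show "semitopological_semigroup (\<lambda>x y. mul y x)"
    by (rule semitopological_semigroup_flip[OF semitop])
  have "inj gis_inv" by (metis gis_inv_gis_inv injI)
  then have "inj_on gis_inv G" by (rule inj_on_subset) simp
  then show "inj_on (h \<circ> gis_inv) G" by (rule comp_inj_on) (simp add: gis_inv_image inj)
next
  fix x y assume "x \<in> G" "y \<in> G"
  have "gis_inv (gis_mult x y) = gis_mult (gis_inv y) (gis_inv x)"
    by (simp add: gis_mult_gis_inv)
  then show "(h \<circ> gis_inv) (gis_mult x y) = mul ((h \<circ> gis_inv) y) ((h \<circ> gis_inv) x)"
    using hom[OF gis_inv_mem[OF \<open>y \<in> G\<close>] gis_inv_mem[OF \<open>x \<in> G\<close>]] by simp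
qed

(* The left version, applied to the opposite semigroup embedded by h \<circ> gis_inv. *)
lemma right_prefix_neighbourhood:
  assumes a: "Some (p, (v1, v2)) \<in> G"
  obtains W where "open W" "h (Some (p, (v1, v2))) \<in> W"
    "\<And>x. x \<in> G \<Longrightarrow> h x \<in> W \<Longrightarrow> \<exists>p' q2. x = Some (p', (v1, q2)) \<and> prefix q2 v2"
proof -
  interpret flipped: gis_embedding E0 E1 s r "\<lambda>x y. mul y x" "h \<circ> gis_inv"
    by (rule gis_embedding_flip)
  have "Some ((v1, v2), p) \<in> G" using gis_inv_mem[OF a] by (simp add: gis_inv_def)
  then obtain W where W: "open W" "(h \<circ> gis_inv) (Some ((v1, v2), p)) \<in> W"
    and near: "\<And>x. x \<in> G \<Longrightarrow> (h \<circ> gis_inv) x \<in> W \<Longrightarrow>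
      \<exists>q2 p'. x = Some ((v1, q2), p') \<and> prefix q2 v2"
    by (rule flipped.left_prefix_neighbourhood) auto
  show thesis
  proof (rule that[of W])
    show "open W" "h (Some (p, (v1, v2))) \<in> W" using W by (simp_all add: gis_inv_def)
  next
    fix x assume "x \<in> G" "h x \<in> W"
    then obtain q2 p' where "gis_inv x = Some ((v1, q2), p')" "prefix q2 v2"
      using near[of "gis_inv x"] gis_inv_mem by auto
    then show "\<exists>p' q2. x = Some (p', (v1, q2)) \<and> prefix q2 v2"
      by (cases x) (auto simp: gis_inv_def)
  qed
qed

lemma nonzero_isolated:
  assumes dense: "closure (h ` G) = UNIV" and "a \<in> G" "a \<noteq> None"
  shows "open {h a}"
proof -
  obtain u1 u2 v1 v2 where a: "a = Some ((u1, u2), (v1, v2))"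
    using \<open>a \<noteq> None\<close> by (metis not_None_eq prod.exhaust)
  have aG: "Some ((u1, u2), (v1, v2)) \<in> G" using \<open>a \<in> G\<close> a by simp
  obtain WL where WL: "open WL" "h (Some ((u1, u2), (v1, v2))) \<in> WL"
    and left: "\<And>x. x \<in> G \<Longrightarrow> h x \<in> WL \<Longrightarrow> \<exists>p2 q'. x = Some ((u1, p2), q') \<and> prefix p2 u2"
    using left_prefix_neighbourhood[OF aG] by blast
  obtain WR where WR: "open WR" "h (Some ((u1, u2), (v1, v2))) \<in> WR"
    and right: "\<And>x. x \<in> G \<Longrightarrow> h x \<in> WR \<Longrightarrow> \<exists>p' q2. x = Some (p', (v1, q2)) \<and> prefix q2 v2"
    using right_prefix_neighbourhood[OF aG] by blast
  let ?P = "(\<lambda>(p2, q2). Some ((u1, p2), (v1, q2))) ` (set (prefixes u2) \<times> set (prefixes v2))"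
  have "WL \<inter> WR \<inter> h ` G \<subseteq> h ` ?P"
  proof clarify
    fix x assume x: "x \<in> G" "h x \<in> WL" "h x \<in> WR"
    obtain p2 q' where l: "x = Some ((u1, p2), q')" "prefix p2 u2" using left[OF x(1,2)] by blast
    obtain p' q2 where r: "x = Some (p', (v1, q2))" "prefix q2 v2" using right[OF x(1,3)] by blast
    have "x \<in> ?P" using l r by (auto intro!: image_eqI[where x = "(p2, q2)"])
    then show "h x \<in> h ` ?P" by (rule imageI)
  qed
  then have "finite (WL \<inter> WR \<inter> h ` G)" by (rule finite_subset) simp
  then show ?thesis
    by (rule isolated_of_dense_finite_trace[OF dense, rotated 2]) (use WL WR a in auto)
qed

end

theorem corollary2p3:
  fixes E0 :: "'v set" and E1 :: "'e set" and s r :: "'e \<Rightarrow> 'v"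
    and mul :: "'s::t2_space \<Rightarrow> 's \<Rightarrow> 's"
    and h :: "('v, 'e) gis_elem \<Rightarrow> 's"
    and X :: "('v, 'e) gis_elem set"
  assumes graph: "\<forall>e\<in>E1. s e \<in> E0 \<and> r e \<in> E0"
    and semitop: "semitopological_semigroup mul"
    and clp: "clp_compact (UNIV :: 's set)"
    and inj: "inj_on h (graph_inverse_semigroup E0 E1 s r)"
    and hom: "\<forall>x\<in>graph_inverse_semigroup E0 E1 s r. \<forall>y\<in>graph_inverse_semigroup E0 E1 s r.
                 h (gis_mult x y) = mul (h x) (h y)"
    and dense: "closure (h ` graph_inverse_semigroup E0 E1 s r) = UNIV"
    and X: "X \<subseteq> graph_inverse_semigroup E0 E1 s r"
  shows "countably_compact_at (closure (h ` X)) (h ` X)"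
proof -
  interpret gis_embedding E0 E1 s r mul h
    by unfold_locales (use graph semitop inj hom in auto)
  show ?thesis
  proof (rule clp_compact_countably_compact_at_closure[OF clp])
    show "finite {h None}" by simp
    fix b assume "b \<in> h ` X - {h None}"
    then obtain x where "x \<in> X" "b = h x" by blast
    moreover from this have "x \<noteq> None" using \<open>b \<in> h ` X - {h None}\<close> by (intro notI) simp
    ultimately show "open {b}" using X nonzero_isolated[OF dense] by blast
  qed
qed

end
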